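(* Under the standing assumptions, let $H$ be a wide subgroupoid of $\mathcal G$ and set $\gamma(H)=\bigoplus_{h\in H}J_h$. Then $\gamma(H)$ is a $C(R)$-subalgebra of $R$ and $$\gamma(H)=V_R\big(R^{\beta_{\mathcal S_H}}\big),$$ where $\mathcal S_H=\{h\in H:J_h\neq\{0\}\}$ and $R^{\beta_{\mathcal S_H}}=\{r\in R:\beta_h(r1_{h^{-1}})=r1_h\ \text{for all } h\in\mathcal S_H\}$.
   Context: All rings and algebras are associative and unital. A groupoid is a nonempty set $\mathcal G$ with a partially defined associative multiplication in which every $g$ has an inverse $g^{-1}$, a left identity $r(g)=gg^{-1}$ and a right identity $d(g)=g^{-1}g$; $gh$ is defined iff $d(g)=r(h)$; $\mathcal G_0$ is the set of identities. A subgroupoid is a nonempty subset closed under inverses and defined products; it is wide if it contains $\mathcal G_0$. Standing assumptions: $K$ commutative ring, $R$ a $K$-algebra, $\mathcal G$ a finite groupoid, $\beta=(\{E_g\},\{\beta_g\})$ a unital action of $\mathcal G$ on $R$: $E_g=E_{r(g)}$ is an ideal of $R$, unital with identity $1_g$ (so $1_{g^{-1}}=1_{d(g)}$), $\beta_g:E_{g^{-1}}\to E_g$ a $K$-algebra isomorphism, $\beta_e=\mathrm{id}_{E_e}$ for $e\in\mathcal G_0$, $\beta_g\beta_h(x)=\beta_{gh}(x)$ whenever $d(g)=r(h)$, $x\in E_{h^{-1}}$; $R=\bigoplus_{e\in\mathcal G_0}E_e$; and $R$ is a $\beta$-Galois extension of $R^\beta=\{r\in R:\beta_g(r1_{g^{-1}})=r1_g\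 \forall g\}$: there exist $x_i,y_i\in R$ ($1\le i\le m$) with $\sum_i x_i\beta_g(y_i1_{g^{-1}})=1_g$ if $g\in\mathcal G_0$ and $=0$ otherwise. $C(R)$ is the center of $R$, $V_R(S)=\{r\in R: rs=sr\ \forall s\in S\}$. For $g\in\mathcal G$, $J_g=\{r\in E_g: r\beta_g(x1_{g^{-1}})=xr\ \forall x\in R\}$; the sum $\bigoplus_{h\in H}J_h$ is a direct sum inside $R$. *)

theory Defs
  imports Main
begin

definition gdom :: "('g \<Rightarrow> 'g \<Rightarrow> 'g) \<Rightarrow> ('g \<Rightarrow> 'g) \<Rightarrow> 'g \<Rightarrow> 'g" where
  "gdom m i g = m (i g) g"

definition gran :: "('g \<Rightarrow> 'g \<Rightarrow> 'g) \<Rightarrow> ('g \<Rightarrow> 'g) \<Rightarrow> 'g \<Rightarrow> 'g" where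
  "gran m i g = m g (i g)"

(* the product g h is defined iff d(g) = r(h) *)
definition groupoid :: "'g set \<Rightarrow> ('g \<Rightarrow> 'g \<Rightarrow> 'g) \<Rightarrow> ('g \<Rightarrow> 'g) \<Rightarrow> bool" where
  "groupoid G m i \<longleftrightarrow>
     G \<noteq> {} \<and>
     (\<forall>g\<in>G. i g \<in> G \<and> i (i g) = g) \<and>
     (\<forall>g\<in>G. \<forall>h\<in>G. gdom m i g = gran m i h \<longrightarrow>
         m g h \<in> G \<and> gdom m i (m g h) = gdom m i h \<and> gran m i (m g h) = gran m i g) \<and>
     (\<forall>g\<in>G. \<forall>h\<in>G. \<forall>k\<in>G. gdom m i g = gran m i h \<longrightarrow> gdom m i h = gran m i k \<longrightarrow>
         m (m g h) k = m g (m h k)) \<and>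
     (\<forall>g\<in>G. m (gran m i g) g = g \<and> m g (gdom m i g) = g)"

definition identities :: "'g set \<Rightarrow> ('g \<Rightarrow> 'g \<Rightarrow> 'g) \<Rightarrow> ('g \<Rightarrow> 'g) \<Rightarrow> 'g set" where
  "identities G m i = gran m i ` G"

definition wide_subgroupoid :: "'g set \<Rightarrow> 'g set \<Rightarrow> ('g \<Rightarrow> 'g \<Rightarrow> 'g) \<Rightarrow> ('g \<Rightarrow> 'g) \<Rightarrow> bool" where
  "wide_subgroupoid H G m i \<longleftrightarrow>
     H \<subseteq> G \<and> H \<noteq> {} \<and>
     (\<forall>h\<in>H. i h \<in> H) \<and>
     (\<forall>g\<in>H. \<forall>h\<in>H. gdom m i g = gran m i h \<longrightarrow> m g h \<in> H) \<and>
     identities G m i \<subseteq> H"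

definition two_sided_ideal :: "'r::ring set \<Rightarrow> bool" where
  "two_sided_ideal I \<longleftrightarrow> 0 \<in> I \<and> (\<forall>x\<in>I. \<forall>y\<in>I. x + y \<in> I) \<and> (\<forall>x\<in>I. - x \<in> I) \<and>
     (\<forall>x\<in>I. \<forall>r. r * x \<in> I \<and> x * r \<in> I)"

definition center :: "'r::ring set" where
  "center = {c. \<forall>x. c * x = x * c}"

definition centralizer :: "'r::ring set \<Rightarrow> 'r set" where
  "centralizer S = {r. \<forall>s\<in>S. r * s = s * r}"

definition subalgebra_over :: "'r::ring_1 set \<Rightarrow> 'r set \<Rightarrow> bool" where
  "subalgebra_over C S \<longleftrightarrow> 0 \<in> S \<and> 1 \<in> S \<and>
     (\<forall>x\<in>S. \<forall>y\<in>S. x + y \<in> S \<and> x * y \<in> S) \<and> (\<forall>x\<in>S. - x \<in> S) \<and>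
     (\<forall>c\<in>C. \<forall>x\<in>S. c * x \<in> S)"

(* E g = ideal E_g, one g = 1_g, beta g : E_{g^-1} \<rightarrow> E_g *)
definition unital_action ::
  "'g set \<Rightarrow> ('g \<Rightarrow> 'g \<Rightarrow> 'g) \<Rightarrow> ('g \<Rightarrow> 'g) \<Rightarrow> ('g \<Rightarrow> 'r::ring_1 set) \<Rightarrow> ('g \<Rightarrow> 'r) \<Rightarrow> ('g \<Rightarrow> 'r \<Rightarrow> 'r) \<Rightarrow> bool" where
  "unital_action G m i E one \<beta> \<longleftrightarrow>
     (\<forall>g\<in>G. E g = E (gran m i g)) \<and>
     (\<forall>g\<in>G. two_sided_ideal (E g)) \<and>
     (\<forall>g\<in>G. one g \<in> E g \<and> (\<forall>x\<in>E g. one g * x = x \<and> x * one g = x)) \<and>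
     (\<forall>g\<in>G. bij_betw (\<beta> g) (E (i g)) (E g) \<and>
        (\<forall>x\<in>E (i g). \<forall>y\<in>E (i g). \<beta> g (x + y) = \<beta> g x + \<beta> g y \<and> \<beta> g (x * y) = \<beta> g x * \<beta> g y) \<and>
        \<beta> g (one (i g)) = one g) \<and>
     (\<forall>e\<in>identities G m i. \<forall>x\<in>E e. \<beta> e x = x) \<and>
     (\<forall>g\<in>G. \<forall>h\<in>G. gdom m i g = gran m i h \<longrightarrow> (\<forall>x\<in>E (i h). \<beta> g (\<beta> h x) = \<beta> (m g h) x)) \<and>
     (\<forall>x. \<exists>f. (\<forall>e\<in>identities G m i. f e \<in> E e) \<and> x = (\<Sum>e\<in>identities G m i. f e)) \<and>
     (\<forall>f. (\<forall>e\<in>identities G m i. f e \<in> E e) \<and> (\<Sum>e\<in>identities G m i. f e) = 0 \<longrightarrow>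
          (\<forall>e\<in>identities G m i. f e = 0))"

definition galois_extension ::
  "'g set \<Rightarrow> ('g \<Rightarrow> 'g \<Rightarrow> 'g) \<Rightarrow> ('g \<Rightarrow> 'g) \<Rightarrow> ('g \<Rightarrow> 'r::ring_1) \<Rightarrow> ('g \<Rightarrow> 'r \<Rightarrow> 'r) \<Rightarrow> bool" where
  "galois_extension G m i one \<beta> \<longleftrightarrow>
     (\<exists>(n::nat) x y. \<forall>g\<in>G.
        (\<Sum>k\<in>{1..n}. x k * \<beta> g (y k * one (i g))) = (if g \<in> identities G m i then one g else 0))"

definition Jset :: "('g \<Rightarrow> 'g) \<Rightarrow> ('g \<Rightarrow> 'r::ring_1 set) \<Rightarrow> ('g \<Rightarrow> 'r) \<Rightarrow> ('g \<Rightarrow> 'r \<Rightarrow> 'r) \<Rightarrow> 'g \<Rightarrow> 'r set" where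
  "Jset i E one \<beta> g = {r \<in> E g. \<forall>x. r * \<beta> g (x * one (i g)) = x * r}"

definition gamma :: "('g \<Rightarrow> 'g) \<Rightarrow> ('g \<Rightarrow> 'r::ring_1 set) \<Rightarrow> ('g \<Rightarrow> 'r) \<Rightarrow> ('g \<Rightarrow> 'r \<Rightarrow> 'r) \<Rightarrow> 'g set \<Rightarrow> 'r set" where
  "gamma i E one \<beta> H = {(\<Sum>h\<in>H. f h) | f. \<forall>h\<in>H. f h \<in> Jset i E one \<beta> h}"

definition supp_set :: "('g \<Rightarrow> 'g) \<Rightarrow> ('g \<Rightarrow> 'r::ring_1 set) \<Rightarrow> ('g \<Rightarrow> 'r) \<Rightarrow> ('g \<Rightarrow> 'r \<Rightarrow> 'r) \<Rightarrow> 'g set \<Rightarrow> 'g set" where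
  "supp_set i E one \<beta> H = {h \<in> H. Jset i E one \<beta> h \<noteq> {0}}"

definition invariants :: "('g \<Rightarrow> 'g) \<Rightarrow> ('g \<Rightarrow> 'r::ring_1) \<Rightarrow> ('g \<Rightarrow> 'r \<Rightarrow> 'r) \<Rightarrow> 'g set \<Rightarrow> 'r set" where
  "invariants i one \<beta> S = {r. \<forall>h\<in>S. \<beta> h (r * one (i h)) = r * one h}"

end

theory Submission imports Defs begin

text \<open>
  The units \<open>1\<^sub>e\<close>, \<open>e \<in> G\<^sub>0\<close>, are central orthogonal idempotents summing to \<open>1\<close>, so
  \<open>beta_ext g x = \<beta>\<^sub>g(x 1\<^bsub>g\<inverse>\<^esub>)\<close> is a ring homomorphism \<open>R \<rightarrow> E\<^sub>g\<close>. An element of \<open>J\<^sub>h\<close> commutes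
  with every \<open>\<beta>\<^sub>h\<close>-invariant and \<open>J\<^sub>h = 0\<close> for \<open>h \<notin> S\<^sub>H\<close>, so \<open>\<gamma>(H)\<close> centralizes the
  \<open>S\<^sub>H\<close>-invariants, whose centralizer lies in that of the \<open>H\<close>-invariants. Conversely, the Galois
  coordinates give \<open>z = \<Sum>\<^sub>k x\<^sub>k tr(y\<^sub>k z)\<close> for the \<open>H\<close>-trace \<open>tr = \<Sum>\<^sub>h\<^sub>\<in>\<^sub>H beta_ext h\<close>,
  whose values are \<open>H\<close>-invariant. Hence \<open>v\<close> centralizing the \<open>H\<close>-invariants satisfies
  \<open>z v = \<Sum>\<^sub>h w\<^sub>h beta_ext h z\<close> with \<open>w\<^sub>h = \<Sum>\<^sub>k x\<^sub>k v beta_ext h y\<^sub>k\<close>; the dual relations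
  \<open>\<Sum>\<^sub>k beta_ext g x\<^sub>k beta_ext h y\<^sub>k = \<delta>\<^sub>g\<^sub>h 1\<^sub>h\<close> give \<open>w\<^sub>h \<in> J\<^sub>h\<close>, and \<open>z = 1\<close> gives
  \<open>v = \<Sum>\<^sub>h w\<^sub>h \<in> \<gamma>(H)\<close>.
\<close>

lemma subalgebra_over_center_centralizer: "subalgebra_over center (centralizer S)"
  unfolding subalgebra_over_def centralizer_def center_def
  by (auto simp: algebra_simps) (metis mult.assoc)+

locale groupoid_struct =
  fixes G :: "'g set" and m :: "'g \<Rightarrow> 'g \<Rightarrow> 'g" and i :: "'g \<Rightarrow> 'g"
  assumes is_groupoid: "groupoid G m i"
begin

abbreviation d where "d \<equiv> gdom m i"
abbreviation r where "r \<equiv> gran m i"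
abbreviation G\<^sub>0 where "G\<^sub>0 \<equiv> identities G m i"

lemma inv_closed: "g \<in> G \<Longrightarrow> i g \<in> G"
  and inv_inv: "g \<in> G \<Longrightarrow> i (i g) = g"
  using is_groupoid unfolding groupoid_def by auto

lemma mult_closed:
  "g \<in> G \<Longrightarrow> h \<in> G \<Longrightarrow> d g = r h \<Longrightarrow> m g h \<in> G \<and> d (m g h) = d h \<and> r (m g h) = r g"
  using is_groupoid unfolding groupoid_def by blast

lemma mult_assoc:
  "g \<in> G \<Longrightarrow> h \<in> G \<Longrightarrow> k \<in> G \<Longrightarrow> d g = r h \<Longrightarrow> d h = r k \<Longrightarrow> m (m g h) k = m g (m h k)"
  using is_groupoid unfolding groupoid_def by blast

lemma mult_ran_left: "g \<in> G \<Longrightarrow> m (r g) g = g"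
  and mult_dom_right: "g \<in> G \<Longrightarrow> m g (d g) = g"
  using is_groupoid unfolding groupoid_def by blast+

lemma dom_inv: "g \<in> G \<Longrightarrow> d (i g) = r g"
  and ran_inv: "g \<in> G \<Longrightarrow> r (i g) = d g"
  unfolding gdom_def gran_def using inv_inv by simp_all

lemma ran_closed: "g \<in> G \<Longrightarrow> r g \<in> G"
  and ran_ran: "g \<in> G \<Longrightarrow> r (r g) = r g"
  and dom_ran: "g \<in> G \<Longrightarrow> d (r g) = r g"
  using mult_closed[of g "i g"] inv_closed dom_inv ran_inv unfolding gran_def by metis+

lemma dom_closed: "g \<in> G \<Longrightarrow> d g \<in> G"
  and ran_dom: "g \<in> G \<Longrightarrow> r (d g) = d g"
  using ran_closed[of "i g"] ran_ran[of "i g"] inv_closed ran_inv by metis+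

lemma identities_iff: "e \<in> G\<^sub>0 \<longleftrightarrow> e \<in> G \<and> r e = e"
proof
  assume "e \<in> G\<^sub>0"
  then obtain g where "g \<in> G" "e = r g" unfolding identities_def by blast
  then show "e \<in> G \<and> r e = e" using ran_closed ran_ran by simp
qed (metis identities_def image_eqI)

lemma ran_in_identities: "g \<in> G \<Longrightarrow> r g \<in> G\<^sub>0"
  and dom_in_identities: "g \<in> G \<Longrightarrow> d g \<in> G\<^sub>0"
  using identities_iff ran_closed ran_ran dom_closed ran_dom by blast+

lemma inv_identity: assumes "e \<in> G\<^sub>0" shows "i e = e"
proof -
  have e: "e \<in> G" "r e = e" using assms identities_iff by auto
  have "i e = m (i e) (d (i e))" using mult_dom_right[OF inv_closed[OF e(1)]] by simp
  also have "\<dots> = d e" using dom_inv e by (simp add: gdom_def)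
  finally show ?thesis using dom_ran[OF e(1)] e(2) by simp
qed

lemma inv_mult_cancel_left: "g \<in> G \<Longrightarrow> h \<in> G \<Longrightarrow> d g = r h \<Longrightarrow> m (i g) (m g h) = h"
  using mult_assoc[of "i g" g h] inv_closed dom_inv mult_ran_left by (simp add: gdom_def)

lemma mult_inv_cancel_left:
  assumes g: "g \<in> G" and k: "k \<in> G" and "r k = r g"
  shows "m g (m (i g) k) = k"
proof -
  have "m g (m (i g) k) = m (r g) k"
    using mult_assoc[OF g inv_closed[OF g] k] dom_inv[OF g] ran_inv[OF g] assms(3)
    by (simp add: gran_def)
  then show ?thesis using mult_ran_left[OF k] assms(3) by simp
qed

end

locale groupoid_action = groupoid_struct G m i
  for G :: "'g set" and m i +
  fixes E :: "'g \<Rightarrow> 'r::ring_1 set" and one :: "'g \<Rightarrow> 'r" and \<beta> :: "'g \<Rightarrow> 'r \<Rightarrow> 'r"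
  assumes finite_G: "finite G" and unital: "unital_action G m i E one \<beta>"
begin

lemma finite_identities: "finite G\<^sub>0"
  unfolding identities_def using finite_G by simp

lemma E_ran: "g \<in> G \<Longrightarrow> E g = E (r g)"
  using unital unfolding unital_action_def by (elim conjE) blast

lemma E_ideal: "g \<in> G \<Longrightarrow> two_sided_ideal (E g)"
  using unital unfolding unital_action_def by (elim conjE) blast

lemma zero_in_E: "g \<in> G \<Longrightarrow> 0 \<in> E g"
  and add_in_E: "g \<in> G \<Longrightarrow> a \<in> E g \<Longrightarrow> b \<in> E g \<Longrightarrow> a + b \<in> E g"
  and mult_in_E_left: "g \<in> G \<Longrightarrow> a \<in> E g \<Longrightarrow> c * a \<in> E g"
  and mult_in_E_right: "g \<in> G \<Longrightarrow> a \<in> E g \<Longrightarrow> a * c \<in> E g"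
  using E_ideal by (simp_all add: two_sided_ideal_def)

lemma sum_in_E:
  assumes "g \<in> G" "finite A" "\<And>a. a \<in> A \<Longrightarrow> f a \<in> E g" shows "sum f A \<in> E g"
  using assms(2,3) by (induction A rule: finite_induct) (auto intro: zero_in_E[OF assms(1)] add_in_E[OF assms(1)])

lemma one_in_E: "g \<in> G \<Longrightarrow> one g \<in> E g"
  using unital unfolding unital_action_def by (elim conjE) blast

lemma one_mult_E: "g \<in> G \<Longrightarrow> a \<in> E g \<Longrightarrow> one g * a = a"
  using unital unfolding unital_action_def by (elim conjE) blast

lemma E_mult_one: "g \<in> G \<Longrightarrow> a \<in> E g \<Longrightarrow> a * one g = a"
  using unital unfolding unital_action_def by (elim conjE) blast

lemma one_idem: "g \<in> G \<Longrightarrow> one g * one g = one g"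
  using one_mult_E one_in_E by blast

lemma beta_in_E: "g \<in> G \<Longrightarrow> a \<in> E (i g) \<Longrightarrow> \<beta> g a \<in> E g"
  using unital unfolding unital_action_def by (elim conjE) (meson bij_betw_apply)

lemma beta_add: "g \<in> G \<Longrightarrow> a \<in> E (i g) \<Longrightarrow> b \<in> E (i g) \<Longrightarrow> \<beta> g (a + b) = \<beta> g a + \<beta> g b"
  using unital unfolding unital_action_def by (elim conjE) blast

lemma beta_mult: "g \<in> G \<Longrightarrow> a \<in> E (i g) \<Longrightarrow> b \<in> E (i g) \<Longrightarrow> \<beta> g (a * b) = \<beta> g a * \<beta> g b"
  using unital unfolding unital_action_def by (elim conjE) blast

lemma beta_one: "g \<in> G \<Longrightarrow> \<beta> g (one (i g)) = one g"
  using unital unfolding unital_action_def by (elim conjE) blast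

lemma beta_identity: "e \<in> G\<^sub>0 \<Longrightarrow> a \<in> E e \<Longrightarrow> \<beta> e a = a"
  using unital unfolding unital_action_def by (elim conjE) metis

lemma beta_comp:
  "g \<in> G \<Longrightarrow> h \<in> G \<Longrightarrow> d g = r h \<Longrightarrow> a \<in> E (i h) \<Longrightarrow> \<beta> g (\<beta> h a) = \<beta> (m g h) a"
  using unital unfolding unital_action_def by (elim conjE) metis

lemma beta_zero: "g \<in> G \<Longrightarrow> \<beta> g 0 = 0"
  using beta_add[of g 0 0] zero_in_E[OF inv_closed] by simp

lemma E_decomposition: "\<exists>c. (\<forall>e\<in>G\<^sub>0. c e \<in> E e) \<and> x = (\<Sum>e\<in>G\<^sub>0. c e)"
  using unital unfolding unital_action_def by (elim conjE) blast

lemma E_decomposition_unique: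
  "\<forall>e\<in>G\<^sub>0. c e \<in> E e \<Longrightarrow> (\<Sum>e\<in>G\<^sub>0. c e) = 0 \<Longrightarrow> e \<in> G\<^sub>0 \<Longrightarrow> c e = 0"
  using unital unfolding unital_action_def by (elim conjE) blast

lemma one_ran: assumes g: "g \<in> G" shows "one g = one (r g)"
proof -
  have rg: "r g \<in> G" using ran_closed[OF g] .
  have "one (r g) * one g = one g" using one_mult_E[OF rg] one_in_E[OF g] E_ran[OF g] by simp
  moreover have "one (r g) * one g = one (r g)" using E_mult_one[OF g] one_in_E[OF rg] E_ran[OF g] by simp
  ultimately show ?thesis by simp
qed

lemma one_inv: "g \<in> G \<Longrightarrow> one (i g) = one (d g)"
  using one_ran[OF inv_closed] ran_inv by simp

lemma E_identities_disjoint: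
  assumes e: "e \<in> G\<^sub>0" and e': "e' \<in> G\<^sub>0" and ne: "e \<noteq> e'" and a: "a \<in> E e" "a \<in> E e'"
  shows "a = 0"
proof -
  define c where "c x = (if x = e then a else if x = e' then - a else 0)" for x
  have "c x \<in> E x" if "x \<in> G\<^sub>0" for x
  proof -
    have "x \<in> G" "e' \<in> G" using that e' identities_iff by blast+
    then show ?thesis
      using a mult_in_E_left[of e' a "- 1"] zero_in_E[of x] unfolding c_def by auto
  qed
  moreover have "(\<Sum>x\<in>G\<^sub>0. c x) = 0"
  proof -
    have "c = (\<lambda>x. (if x = e then a else 0) + (if x = e' then - a else 0))"
      using ne unfolding c_def by fastforce
    then show ?thesis using e e' finite_identities by (simp only: sum.distrib sum.delta) simp
  qed
  ultimately have "c e = 0" using E_decomposition_unique[of c e] e by blast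
  then show ?thesis unfolding c_def by simp
qed

lemma E_mult_orthogonal:
  assumes g: "g \<in> G" and h: "h \<in> G" and "r g \<noteq> r h" and a: "a \<in> E g" and b: "b \<in> E h"
  shows "a * b = 0"
proof -
  have "a * b \<in> E (r g)" using mult_in_E_right[OF g a] E_ran[OF g] by simp
  moreover have "a * b \<in> E (r h)" using mult_in_E_left[OF h b] E_ran[OF h] by simp
  ultimately show ?thesis
    using E_identities_disjoint[OF ran_in_identities[OF g] ran_in_identities[OF h] \<open>r g \<noteq> r h\<close>] by blast
qed

lemma E_mult_one_cases:
  assumes g: "g \<in> G" and h: "h \<in> G" and a: "a \<in> E g"
  shows "a * one h = (if r g = r h then a else 0)"
proof (cases "r g = r h")
  case True
  then show ?thesis using one_ran[OF g] one_ran[OF h] E_mult_one[OF g a] by simp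
next
  case False
  then show ?thesis using E_mult_orthogonal[OF g h False a one_in_E[OF h]] by simp
qed

lemma one_mult_E_cases:
  assumes g: "g \<in> G" and h: "h \<in> G" and a: "a \<in> E g"
  shows "one h * a = (if r g = r h then a else 0)"
proof (cases "r g = r h")
  case True
  then show ?thesis using one_ran[OF g] one_ran[OF h] one_mult_E[OF g a] by simp
next
  case False
  then show ?thesis using E_mult_orthogonal[OF h g _ one_in_E[OF h] a] False by simp
qed

lemma decomposition_component:
  assumes c: "\<forall>e\<in>G\<^sub>0. c e \<in> E e" and e: "e \<in> G\<^sub>0"
  shows "(\<Sum>e'\<in>G\<^sub>0. c e') * one e = c e" and "one e * (\<Sum>e'\<in>G\<^sub>0. c e') = c e"
proof -
  have eG: "e \<in> G" "r e = e" using e identities_iff by blast+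
  have "c e' * one e = (if e' = e then c e' else 0)" and "one e * c e' = (if e' = e then c e' else 0)"
    if e': "e' \<in> G\<^sub>0" for e'
  proof -
    have "e' \<in> G" "r e' = e'" using e' identities_iff by blast+
    then show "c e' * one e = (if e' = e then c e' else 0)" "one e * c e' = (if e' = e then c e' else 0)"
      using E_mult_one_cases[of e' e "c e'"] one_mult_E_cases[of e' e "c e'"] eG c e' by auto
  qed
  then show "(\<Sum>e'\<in>G\<^sub>0. c e') * one e = c e" "one e * (\<Sum>e'\<in>G\<^sub>0. c e') = c e"
    unfolding sum_distrib_right sum_distrib_left using e finite_identities by simp_all
qed

lemma one_central: assumes g: "g \<in> G" shows "one g * x = x * one g"
proof -
  obtain c where c: "\<forall>e\<in>G\<^sub>0. c e \<in> E e" "x = (\<Sum>e\<in>G\<^sub>0. c e)" using E_decomposition by blast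
  show ?thesis
    unfolding one_ran[OF g] c(2) using decomposition_component[OF c(1) ran_in_identities[OF g]] by simp
qed

lemma sum_one_identities: "(\<Sum>e\<in>G\<^sub>0. one e) = 1"
proof -
  obtain c where c: "\<forall>e\<in>G\<^sub>0. c e \<in> E e" "1 = (\<Sum>e\<in>G\<^sub>0. c e)" using E_decomposition by blast
  have "one e = c e" if "e \<in> G\<^sub>0" for e
    using decomposition_component(1)[OF c(1) that] c(2) by simp
  then show ?thesis using c(2) by simp
qed

definition beta_ext :: "'g \<Rightarrow> 'r \<Rightarrow> 'r" where
  "beta_ext g x = \<beta> g (x * one (i g))"

lemma mult_one_inv_in_E: "g \<in> G \<Longrightarrow> x * one (i g) \<in> E (i g)"
  using mult_in_E_left[OF inv_closed one_in_E[OF inv_closed]] by blast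

lemma beta_ext_in_E: "g \<in> G \<Longrightarrow> beta_ext g x \<in> E g"
  unfolding beta_ext_def using beta_in_E mult_one_inv_in_E by blast

lemma beta_ext_add: "g \<in> G \<Longrightarrow> beta_ext g (x + y) = beta_ext g x + beta_ext g y"
  unfolding beta_ext_def using beta_add mult_one_inv_in_E by (simp add: distrib_right)

lemma beta_ext_mult:
  assumes g: "g \<in> G" shows "beta_ext g (x * y) = beta_ext g x * beta_ext g y"
proof -
  have "x * y * one (i g) = (x * one (i g)) * (y * one (i g))"
    using one_central[OF inv_closed[OF g], of y] one_idem[OF inv_closed[OF g]] by (metis mult.assoc)
  then show ?thesis unfolding beta_ext_def using beta_mult[OF g] mult_one_inv_in_E[OF g] by simp
qed

lemma beta_ext_zero: "g \<in> G \<Longrightarrow> beta_ext g 0 = 0"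
  unfolding beta_ext_def using beta_zero by simp

lemma beta_ext_one: "g \<in> G \<Longrightarrow> beta_ext g 1 = one g"
  unfolding beta_ext_def using beta_one by simp

lemma beta_ext_sum:
  assumes "g \<in> G" "finite A" shows "beta_ext g (\<Sum>a\<in>A. f a) = (\<Sum>a\<in>A. beta_ext g (f a))"
  using assms(2) by (induction A rule: finite_induct) (simp_all add: beta_ext_zero beta_ext_add assms(1))

lemma beta_ext_identity: assumes e: "e \<in> G\<^sub>0" shows "beta_ext e x = x * one e"
proof -
  have "e \<in> G" using e identities_iff by blast
  then show ?thesis
    unfolding beta_ext_def inv_identity[OF e] using beta_identity[OF e] mult_in_E_left one_in_E by blast
qed

lemma beta_ext_comp:
  assumes g: "g \<in> G" and h: "h \<in> G" and gh: "d g = r h"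
  shows "beta_ext g (beta_ext h x) = beta_ext (m g h) x"
proof -
  have "one (i g) = one h" using one_inv[OF g] gh one_ran[OF h] by simp
  then have "beta_ext g (beta_ext h x) = \<beta> g (\<beta> h (x * one (i h)))"
    unfolding beta_ext_def using E_mult_one[OF h] beta_ext_in_E[OF h] by (simp add: beta_ext_def)
  also have "\<dots> = \<beta> (m g h) (x * one (i h))" using beta_comp[OF g h gh mult_one_inv_in_E[OF h]] .
  also have "one (i h) = one (i (m g h))" using one_inv mult_closed[OF g h gh] h by simp
  finally show ?thesis unfolding beta_ext_def .
qed

lemma beta_ext_comp_zero:
  assumes g: "g \<in> G" and h: "h \<in> G" and "r h \<noteq> d g"
  shows "beta_ext g (beta_ext h x) = 0"
proof -
  have "beta_ext h x * one (i g) = 0"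
    using E_mult_one_cases[OF h dom_closed[OF g] beta_ext_in_E[OF h]] one_inv[OF g] ran_dom[OF g] assms(3)
    by simp
  then show ?thesis using beta_zero[OF g] by (simp add: beta_ext_def[of g])
qed

lemma mem_invariants_iff: "t \<in> invariants i one \<beta> S \<longleftrightarrow> (\<forall>h\<in>S. beta_ext h t = t * one h)"
  by (simp add: invariants_def beta_ext_def)

lemma mem_Jset_iff: "a \<in> Jset i E one \<beta> h \<longleftrightarrow> a \<in> E h \<and> (\<forall>z. a * beta_ext h z = z * a)"
  by (simp add: Jset_def beta_ext_def)

lemma Jset_commute_invariant:
  assumes h: "h \<in> G" and a: "a \<in> Jset i E one \<beta> h" and t: "beta_ext h t = t * one h"
  shows "a * t = t * a"
proof -
  have "t * a = a * beta_ext h t" using a by (simp add: mem_Jset_iff)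
  also have "\<dots> = (a * one h) * t" using t one_central[OF h, of t] by (simp add: mult.assoc)
  also have "\<dots> = a * t" using a E_mult_one[OF h] by (simp add: mem_Jset_iff)
  finally show ?thesis by simp
qed

end

locale galois_action = groupoid_action G m i E one \<beta>
  for G :: "'g set" and m i and E :: "'g \<Rightarrow> 'r::ring_1 set" and one \<beta> +
  fixes n :: nat and x y :: "nat \<Rightarrow> 'r"
  assumes galois_coords:
    "\<forall>g\<in>G. (\<Sum>k\<in>{1..n}. x k * \<beta> g (y k * one (i g))) = (if g \<in> G\<^sub>0 then one g else 0)"
begin

lemma galois_coords_beta_ext:
  "g \<in> G \<Longrightarrow> (\<Sum>k\<in>{1..n}. x k * beta_ext g (y k)) = (if g \<in> G\<^sub>0 then one g else 0)"
  using galois_coords unfolding beta_ext_def by blast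

text \<open>Apply \<open>beta_ext g\<close> to the Galois relation for \<open>g\<inverse>h\<close>.\<close>

lemma galois_coords_dual:
  assumes g: "g \<in> G" and h: "h \<in> G"
  shows "(\<Sum>k\<in>{1..n}. beta_ext g (x k) * beta_ext h (y k)) = (if g = h then one h else 0)"
proof (cases "r g = r h")
  case False
  then have "g \<noteq> h" by auto
  then show ?thesis
    using E_mult_orthogonal[OF g h False beta_ext_in_E[OF g] beta_ext_in_E[OF h]] by simp
next
  case True
  define k where "k = m (i g) h"
  have dg: "d (i g) = r h" using dom_inv[OF g] True by simp
  have k: "k \<in> G" "r k = d g"
    using mult_closed[OF inv_closed[OF g] h dg] ran_inv[OF g] unfolding k_def by auto
  have gk: "m g k = h" unfolding k_def using mult_inv_cancel_left[OF g h] True by simp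
  have "(\<Sum>j\<in>{1..n}. beta_ext g (x j) * beta_ext h (y j))
      = beta_ext g (\<Sum>j\<in>{1..n}. x j * beta_ext k (y j))"
    using beta_ext_comp[OF g k(1)] k(2) gk by (simp add: beta_ext_sum[OF g] beta_ext_mult[OF g])
  also have "\<dots> = beta_ext g (if k \<in> G\<^sub>0 then one k else 0)" using galois_coords_beta_ext[OF k(1)] by simp
  also have "\<dots> = (if g = h then one h else 0)"
  proof (cases "g = h")
    case True
    have "k = d g" unfolding k_def True by (simp add: gdom_def)
    then have "k \<in> G\<^sub>0" "one k = one (i g)" using dom_in_identities[OF g] one_inv[OF g] by auto
    then show ?thesis
      using True beta_one[OF g] one_idem[OF inv_closed[OF g]] by (simp add: beta_ext_def)
  next
    case False
    have "k \<notin> G\<^sub>0"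
    proof
      assume "k \<in> G\<^sub>0"
      then have "k = d g" using identities_iff k by metis
      then show False using gk mult_dom_right[OF g] False by simp
    qed
    then show ?thesis using False beta_ext_zero[OF g] by simp
  qed
  finally show ?thesis .
qed

end

locale galois_wide_subgroupoid = galois_action G m i E one \<beta> n x y
  for G :: "'g set" and m i and E :: "'g \<Rightarrow> 'r::ring_1 set" and one \<beta> n x y +
  fixes H :: "'g set"
  assumes wide: "wide_subgroupoid H G m i"
begin

lemma H_subset: "H \<subseteq> G"
  and H_inv_closed: "h \<in> H \<Longrightarrow> i h \<in> H"
  and H_mult_closed: "g \<in> H \<Longrightarrow> h \<in> H \<Longrightarrow> d g = r h \<Longrightarrow> m g h \<in> H"
  and identities_subset_H: "G\<^sub>0 \<subseteq> H"
  using wide unfolding wide_subgroupoid_def by blast+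

lemma finite_H: "finite H"
  using H_subset finite_G finite_subset by blast

lemma in_H_in_G: "h \<in> H \<Longrightarrow> h \<in> G"
  using H_subset by blast

definition trace :: "'r \<Rightarrow> 'r" where
  "trace a = (\<Sum>h\<in>H. beta_ext h a)"

text \<open>\<open>h \<mapsto> gh\<close> maps the arrows of \<open>H\<close> ending at \<open>d g\<close> bijectively onto those ending at \<open>r g\<close>.\<close>

lemma beta_ext_trace: assumes g: "g \<in> H" shows "beta_ext g (trace a) = trace a * one g"
proof -
  have gG: "g \<in> G" using in_H_in_G g .
  define A where "A = {h \<in> H. r h = d g}"
  define B where "B = {k \<in> H. r k = r g}"
  have bij: "bij_betw (m g) A B"
  proof (rule bij_betw_byWitness[where f' = "m (i g)"])
    show "\<forall>a\<in>A. m (i g) (m g a) = a"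
      unfolding A_def using inv_mult_cancel_left gG in_H_in_G by auto
    show "\<forall>a'\<in>B. m g (m (i g) a') = a'"
      unfolding B_def using mult_inv_cancel_left gG in_H_in_G by auto
    show "m g ` A \<subseteq> B"
      unfolding A_def B_def using H_mult_closed g mult_closed gG in_H_in_G by auto
    show "m (i g) ` B \<subseteq> A"
    proof
      fix c assume "c \<in> m (i g) ` B"
      then obtain k where k: "k \<in> H" "r k = r g" "c = m (i g) k" unfolding B_def by blast
      have dg: "d (i g) = r k" using dom_inv[OF gG] k by simp
      have "c \<in> H" using H_mult_closed[OF H_inv_closed[OF g] k(1) dg] k by simp
      moreover have "r c = d g"
        using mult_closed[OF inv_closed[OF gG] in_H_in_G[OF k(1)] dg] ran_inv[OF gG] k by simp
      ultimately show "c \<in> A" unfolding A_def by simp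
    qed
  qed
  have "beta_ext g (trace a) = (\<Sum>h\<in>H. if r h = d g then beta_ext (m g h) a else 0)"
    unfolding trace_def beta_ext_sum[OF gG finite_H]
    using beta_ext_comp[OF gG] beta_ext_comp_zero[OF gG] in_H_in_G by (intro sum.cong) auto
  also have "\<dots> = (\<Sum>h\<in>A. beta_ext (m g h) a)"
    unfolding A_def by (rule sum.inter_filter[OF finite_H, symmetric])
  also have "\<dots> = (\<Sum>k\<in>B. beta_ext k a)"
    using sum.reindex_bij_betw[OF bij] .
  also have "\<dots> = (\<Sum>k\<in>H. if r k = r g then beta_ext k a else 0)"
    unfolding B_def by (rule sum.inter_filter[OF finite_H])
  also have "\<dots> = (\<Sum>k\<in>H. beta_ext k a * one g)"
    using E_mult_one_cases[OF _ gG beta_ext_in_E] in_H_in_G by (intro sum.cong) auto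
  also have "\<dots> = trace a * one g"
    unfolding trace_def by (simp add: sum_distrib_right)
  finally show ?thesis .
qed

lemma trace_in_invariants: "trace a \<in> invariants i one \<beta> H"
  using beta_ext_trace by (simp add: mem_invariants_iff)

lemma galois_expansion: "z = (\<Sum>k\<in>{1..n}. x k * trace (y k * z))"
proof -
  have "(\<Sum>k\<in>{1..n}. x k * trace (y k * z))
      = (\<Sum>h\<in>H. (\<Sum>k\<in>{1..n}. x k * beta_ext h (y k)) * beta_ext h z)"
    unfolding trace_def sum_distrib_left sum_distrib_right
    by (subst sum.swap) (simp add: beta_ext_mult in_H_in_G mult.assoc)
  also have "\<dots> = (\<Sum>h\<in>H. if h \<in> G\<^sub>0 then z * one h else 0)"
  proof (rule sum.cong)
    fix h assume "h \<in> H"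
    then have h: "h \<in> G" using in_H_in_G by blast
    have "one h * (z * one h) = z * one h"
      using one_central[OF h, of z] one_idem[OF h] by (metis mult.assoc)
    then show "(\<Sum>k\<in>{1..n}. x k * beta_ext h (y k)) * beta_ext h z = (if h \<in> G\<^sub>0 then z * one h else 0)"
      using galois_coords_beta_ext[OF h] beta_ext_identity by simp
  qed simp
  also have "\<dots> = (\<Sum>h\<in>{h \<in> H. h \<in> G\<^sub>0}. z * one h)"
    by (rule sum.inter_filter[OF finite_H, symmetric])
  also have "{h \<in> H. h \<in> G\<^sub>0} = G\<^sub>0"
    using identities_subset_H by blast
  also have "(\<Sum>h\<in>G\<^sub>0. z * one h) = z"
    using sum_one_identities by (simp add: sum_distrib_left[symmetric])
  finally show ?thesis by simp
qed

definition centralizer_coord :: "'r \<Rightarrow> 'g \<Rightarrow> 'r" where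
  "centralizer_coord v h = (\<Sum>k\<in>{1..n}. x k * v * beta_ext h (y k))"

lemma centralizer_coord_in_E: "h \<in> G \<Longrightarrow> centralizer_coord v h \<in> E h"
  unfolding centralizer_coord_def by (rule sum_in_E) (auto intro: mult_in_E_left beta_ext_in_E)

lemma centralizer_expansion:
  assumes v: "v \<in> centralizer (invariants i one \<beta> H)"
  shows "z * v = (\<Sum>h\<in>H. centralizer_coord v h * beta_ext h z)"
proof -
  have "z * v = (\<Sum>k\<in>{1..n}. x k * trace (y k * z)) * v"
    using galois_expansion[of z] by (rule arg_cong)
  also have "\<dots> = (\<Sum>k\<in>{1..n}. x k * (v * trace (y k * z)))"
    using v trace_in_invariants by (simp add: centralizer_def sum_distrib_right mult.assoc)
  also have "\<dots> = (\<Sum>h\<in>H. centralizer_coord v h * beta_ext h z)"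
    unfolding trace_def centralizer_coord_def sum_distrib_left sum_distrib_right
    by (subst sum.swap) (simp add: beta_ext_mult in_H_in_G mult.assoc)
  finally show ?thesis .
qed

lemma sum_centralizer_coord:
  assumes v: "v \<in> centralizer (invariants i one \<beta> H)"
  shows "v = (\<Sum>h\<in>H. centralizer_coord v h)"
  using centralizer_expansion[OF v, of 1]
  by (simp add: beta_ext_one in_H_in_G E_mult_one centralizer_coord_in_E)

lemma centralizer_coord_in_Jset:
  assumes v: "v \<in> centralizer (invariants i one \<beta> H)" and h: "h \<in> H"
  shows "centralizer_coord v h \<in> Jset i E one \<beta> h"
proof -
  have hG: "h \<in> G" using in_H_in_G h .
  have "z * centralizer_coord v h = centralizer_coord v h * beta_ext h z" for z
  proof -
    have "z * centralizer_coord v h = (\<Sum>k\<in>{1..n}. (z * x k * v) * beta_ext h (y k))"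
      unfolding centralizer_coord_def by (simp add: sum_distrib_left mult.assoc)
    also have "\<dots> = (\<Sum>g\<in>H. centralizer_coord v g * beta_ext g z
                       * (\<Sum>k\<in>{1..n}. beta_ext g (x k) * beta_ext h (y k)))"
      unfolding centralizer_expansion[OF v] sum_distrib_left sum_distrib_right
      by (subst sum.swap) (simp add: beta_ext_mult in_H_in_G mult.assoc)
    also have "\<dots> = (\<Sum>g\<in>H. if g = h then centralizer_coord v h * beta_ext h z * one h else 0)"
      using galois_coords_dual in_H_in_G hG by (intro sum.cong) auto
    also have "\<dots> = centralizer_coord v h * beta_ext h z"
      using h finite_H E_mult_one[OF hG beta_ext_in_E[OF hG]] by (simp add: mult.assoc)
    finally show ?thesis .
  qed
  then show ?thesis using centralizer_coord_in_E[OF hG] by (simp add: mem_Jset_iff)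
qed

lemma centralizer_subset_gamma: "centralizer (invariants i one \<beta> H) \<subseteq> gamma i E one \<beta> H"
  using sum_centralizer_coord centralizer_coord_in_Jset unfolding gamma_def by blast

lemma gamma_subset_centralizer:
  "gamma i E one \<beta> H \<subseteq> centralizer (invariants i one \<beta> (supp_set i E one \<beta> H))"
proof
  fix v assume "v \<in> gamma i E one \<beta> H"
  then obtain c where c: "\<forall>h\<in>H. c h \<in> Jset i E one \<beta> h" and v: "v = (\<Sum>h\<in>H. c h)"
    unfolding gamma_def by blast
  have "c h * t = t * c h" if "t \<in> invariants i one \<beta> (supp_set i E one \<beta> H)" "h \<in> H" for t h
  proof (cases "h \<in> supp_set i E one \<beta> H")
    case True
    then have "beta_ext h t = t * one h" using that(1) by (simp add: mem_invariants_iff)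
    then show ?thesis using Jset_commute_invariant in_H_in_G c that(2) by blast
  next
    case False
    then show ?thesis using that c by (auto simp: supp_set_def)
  qed
  then show "v \<in> centralizer (invariants i one \<beta> (supp_set i E one \<beta> H))"
    unfolding centralizer_def v by (simp add: sum_distrib_left sum_distrib_right)
qed

lemma gamma_eq_centralizer:
  "gamma i E one \<beta> H = centralizer (invariants i one \<beta> (supp_set i E one \<beta> H))"
proof
  have "invariants i one \<beta> H \<subseteq> invariants i one \<beta> (supp_set i E one \<beta> H)"
    unfolding invariants_def supp_set_def by blast
  then have "centralizer (invariants i one \<beta> (supp_set i E one \<beta> H))
      \<subseteq> centralizer (invariants i one \<beta> H)"
    unfolding centralizer_def by blast
  then show "centralizer (invariants i one \<beta> (supp_set i E one \<beta> H)) \<subseteq> gamma i E one \<beta> H"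
    using centralizer_subset_gamma by blast
qed (rule gamma_subset_centralizer)

end

theorem lemma3p7:
  fixes G H :: "'g set" and m :: "'g \<Rightarrow> 'g \<Rightarrow> 'g" and i :: "'g \<Rightarrow> 'g"
    and E :: "'g \<Rightarrow> 'r::ring_1 set" and one :: "'g \<Rightarrow> 'r" and \<beta> :: "'g \<Rightarrow> 'r \<Rightarrow> 'r"
  assumes "finite G" and "groupoid G m i"
    and "unital_action G m i E one \<beta>"
    and "galois_extension G m i one \<beta>"
    and "wide_subgroupoid H G m i"
  shows "subalgebra_over center (gamma i E one \<beta> H) \<and>
         gamma i E one \<beta> H = centralizer (invariants i one \<beta> (supp_set i E one \<beta> H))"
proof -
  obtain n :: nat and x y :: "nat \<Rightarrow> 'r"
    where "\<forall>g\<in>G. (\<Sum>k\<in>{1..n}. x k * \<beta> g (y k * one (i g))) = (if g \<in> identities G m i then one g else 0)"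
    using assms(4) unfolding galois_extension_def by blast
  then interpret galois_wide_subgroupoid G m i E one \<beta> n x y H
    using assms(1,2,3,5) by unfold_locales
  show ?thesis
    using gamma_eq_centralizer subalgebra_over_center_centralizer by simp
qed

end
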